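(* Let $X,Y$ be metric spaces, $U\subset X$ and $V\subset Y$ open sets, and $\Psi:X\times X\rightrightarrows Y$ a set-valued mapping with closed graph, where either $X$ or $\operatorname{gr}\Psi$ is complete. Set $F(x)=\Psi(x,x)$. Let $0\le\ell<r$ and assume: (a) for every $u\in U$, every $x\in U$, every $v\in\Psi(x,u)$, every $t$ with $0<t<m(x)$ and every $y\in V$ with $d(y,v)<rt$, there is $x'$ with $d(x,x')\le r^{-1}d(y,v)$ and $y\in\Psi(x',u)$; (b) for every $x\in U$ and all $u,w\in U$: $\sup\{d(z,\Psi(x,w)) : z\in\Psi(x,u)\cap V\}\le \ell\,d(u,w)$. Then $F$ is Milyutin regular on $U\times V$ with $\operatorname{sur}_mF(U|V)\ge r-\ell$.
   Context: $m(x)=d(x,X\setminus U)$ ($d(x,\emptyset)=+\infty$). $B(A,s)=\{y:\exists a\in A,\ d(y,a)\le s\}$. $F$ is Milyutin regular on $U\times V$ if there is $r>0$ with $B(F(x),rt)\cap V\subset F(B(x,t))$ for all $x\in U$, $0\le t<m(x)$; $\operatorname{sur}_mF(U|V)$ is the supremum of such $r$ ($0$ if none). *)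

theory Defs
  imports "HOL-Analysis.Analysis"
begin

definition edist :: "'a::metric_space \<Rightarrow> 'a set \<Rightarrow> ereal" where
  "edist x A = (if A = {} then \<infinity> else ereal (infdist x A))"

text \<open>m(x) = d(x, X \ U)\<close>
definition dist_compl :: "'a::metric_space set \<Rightarrow> 'a \<Rightarrow> ereal" where
  "dist_compl U x = edist x (- U)"

definition Bset :: "'a::metric_space set \<Rightarrow> real \<Rightarrow> 'a set" where
  "Bset A s = {y. \<exists>a\<in>A. dist y a \<le> s}"

definition graph :: "('a \<Rightarrow> 'b set) \<Rightarrow> ('a \<times> 'b) set" where
  "graph F = {(x, y). y \<in> F x}"

definition milyutin_rate :: "('a::metric_space \<Rightarrow> 'b::metric_space set) \<Rightarrow> 'a set \<Rightarrow> 'b set \<Rightarrow> real \<Rightarrow> bool" where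
  "milyutin_rate F U V r \<longleftrightarrow>
     (\<forall>x\<in>U. \<forall>t. 0 \<le> t \<and> ereal t < dist_compl U x \<longrightarrow>
        Bset (F x) (r * t) \<inter> V \<subseteq> (\<Union>x'\<in>Bset {x} t. F x'))"

definition milyutin_regular :: "('a::metric_space \<Rightarrow> 'b::metric_space set) \<Rightarrow> 'a set \<Rightarrow> 'b set \<Rightarrow> bool" where
  "milyutin_regular F U V \<longleftrightarrow> (\<exists>r>0. milyutin_rate F U V r)"

definition sur_m :: "('a::metric_space \<Rightarrow> 'b::metric_space set) \<Rightarrow> 'a set \<Rightarrow> 'b set \<Rightarrow> ereal" where
  "sur_m F U V = (if milyutin_regular F U V
      then Sup {ereal r | r. r > 0 \<and> milyutin_rate F U V r} else 0)"

end

theory Submission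
  imports Defs
begin

text \<open>Given \<open>y \<in> V\<close> close to some \<open>v \<in> F x\<close>, alternate the two hypotheses: regularity of
  \<open>\<Psi>(\<cdot>, x\<^sub>n)\<close> gives \<open>x\<^sub>n\<^sub>+\<^sub>1\<close> with \<open>y \<in> \<Psi>(x\<^sub>n\<^sub>+\<^sub>1, x\<^sub>n)\<close> and
  \<open>d(x\<^sub>n, x\<^sub>n\<^sub>+\<^sub>1) \<le> d(y, v\<^sub>n)/r\<close>, and the Lipschitz property of \<open>\<Psi>(x\<^sub>n\<^sub>+\<^sub>1, \<cdot>)\<close>
  gives \<open>v\<^sub>n\<^sub>+\<^sub>1 \<in> F x\<^sub>n\<^sub>+\<^sub>1\<close> with \<open>d(y, v\<^sub>n\<^sub>+\<^sub>1) \<le> q d(y, v\<^sub>n)\<close> for any \<open>q > \<ell>/r\<close>.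
  Choosing \<open>q < 1\<close>, the steps decay geometrically, the iterates stay in the ball of radius
  \<open>d(y, v)/(r(1 - q)) < t\<close> around \<open>x\<close>, and their limit \<open>z\<close> satisfies \<open>y \<in> \<Psi>(z, z) = F z\<close>
  because the graph of \<open>\<Psi>\<close> is closed.\<close>

lemma infdist_lessE:
  assumes "A \<noteq> {}" "infdist x A < e"
  obtains a where "a \<in> A" "dist x a < e"
proof -
  have "(INF a\<in>A. dist x a) < e" using assms by (simp add: infdist_notempty)
  moreover have "bdd_below ((\<lambda>a. dist x a) ` A)" by (rule bdd_belowI[of _ 0]) auto
  ultimately show ?thesis using that cINF_less_iff[OF assms(1)] by blast
qed

lemma mem_if_dist_less_dist_compl:
  assumes "ereal (dist x z) < dist_compl U x"
  shows "z \<in> U"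
proof (rule ccontr)
  assume "z \<notin> U"
  then have "- U \<noteq> {}" "infdist x (- U) \<le> dist x z" by (auto intro: infdist_le)
  with assms show False by (simp add: dist_compl_def edist_def)
qed

lemma dist_compl_less_shift:
  assumes "ereal t < dist_compl U x"
  shows "ereal (t - dist x z) < dist_compl U z"
proof (cases "- U = {}")
  case False
  have "infdist x (- U) \<le> infdist z (- U) + dist x z" by (rule infdist_triangle)
  with assms False show ?thesis by (simp add: dist_compl_def edist_def)
qed (simp add: dist_compl_def edist_def)

lemma dist_Pair_le_add:
  "dist (a, b) (c, d) \<le> dist a c + dist b d"
proof -
  have "dist (a, b) (c, d) = sqrt ((dist a c)\<^sup>2 + (dist b d)\<^sup>2)" by (rule dist_Pair_Pair)
  also have "\<dots> \<le> sqrt ((dist a c + dist b d)\<^sup>2)"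
    by (intro real_sqrt_le_mono) (simp add: power2_eq_square algebra_simps)
  finally show ?thesis by simp
qed

lemma Cauchy_Pair_prod:
  fixes X :: "nat \<Rightarrow> 'a::metric_space" and Y :: "nat \<Rightarrow> 'b::metric_space"
  assumes "Cauchy X" "Cauchy Y"
  shows "Cauchy (\<lambda>n. (X n, Y n))"
proof (rule metric_CauchyI)
  fix e :: real assume "0 < e"
  then obtain M N where M: "\<forall>m\<ge>M. \<forall>n\<ge>M. dist (X m) (X n) < e/2"
    and N: "\<forall>m\<ge>N. \<forall>n\<ge>N. dist (Y m) (Y n) < e/2"
    using metric_CauchyD[OF assms(1), of "e/2"] metric_CauchyD[OF assms(2), of "e/2"] by auto
  have "dist (X m, Y m) (X n, Y n) < e" if "max M N \<le> m" "max M N \<le> n" for m n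
    using M N that dist_Pair_le_add[of "X m" "Y m" "X n" "Y n"] by fastforce
  then show "\<exists>M. \<forall>m\<ge>M. \<forall>n\<ge>M. dist (X m, Y m) (X n, Y n) < e" by blast
qed

lemma dist_le_geometric_steps:
  fixes xs :: "nat \<Rightarrow> 'a::metric_space"
  assumes q: "0 \<le> q" "q < 1" and steps: "\<And>n. dist (xs n) (xs (Suc n)) \<le> C * q ^ n"
  shows "dist (xs m) (xs (m + k)) \<le> C * q ^ m / (1 - q)"
proof -
  have C: "0 \<le> C" using steps[of 0] zero_le_dist[of "xs 0"] by (metis order_trans mult_1_right power_0)
  have "(1 - q) * dist (xs m) (xs (m + k)) \<le> C * q ^ m * (1 - q ^ k)"
  proof (induction k)
    case (Suc k)
    have "(1 - q) * dist (xs m) (xs (m + Suc k))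
        \<le> (1 - q) * dist (xs m) (xs (m + k)) + (1 - q) * dist (xs (m + k)) (xs (Suc (m + k)))"
      using q dist_triangle[of "xs m" "xs (m + Suc k)" "xs (m + k)"]
      by (simp add: distrib_left[symmetric] mult_left_mono)
    also have "\<dots> \<le> C * q ^ m * (1 - q ^ k) + (1 - q) * (C * q ^ (m + k))"
      using Suc q steps[of "m + k"] by (intro add_mono mult_left_mono) auto
    also have "\<dots> = C * q ^ m * (1 - q ^ Suc k)" by (simp add: power_add algebra_simps)
    finally show ?case .
  qed simp
  also have "\<dots> \<le> C * q ^ m" using C q by (simp add: mult_left_le)
  finally show ?thesis using q by (simp add: field_simps)
qed

lemma Cauchy_if_geometric_steps:
  fixes xs :: "nat \<Rightarrow> 'a::metric_space"
  assumes q: "0 \<le> q" "q < 1" and steps: "\<And>n. dist (xs n) (xs (Suc n)) \<le> C * q ^ n"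
  shows "Cauchy xs"
  unfolding Cauchy_altdef2
proof (intro allI impI)
  fix e :: real assume "0 < e"
  have C: "0 \<le> C" using steps[of 0] zero_le_dist[of "xs 0"] by (metis order_trans mult_1_right power_0)
  obtain N where N: "q ^ N < e * (1 - q) / (C + 1)"
    using real_arch_pow_inv[of "e * (1 - q) / (C + 1)" q] \<open>0 < e\<close> q C by auto
  have "C * q ^ N \<le> (C + 1) * q ^ N" using q by (intro mult_right_mono) auto
  also have "\<dots> < e * (1 - q)" using N C by (simp add: field_simps)
  finally have "C * q ^ N / (1 - q) < e" using q by (simp add: field_simps)
  moreover have "dist (xs n) (xs N) \<le> C * q ^ N / (1 - q)" if "N \<le> n" for n
    using dist_le_geometric_steps[OF q steps, of N "n - N"] that by (simp add: dist_commute)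
  ultimately show "\<exists>N. \<forall>n\<ge>N. dist (xs n) (xs N) < e" by (meson le_less_trans)
qed

lemma Cauchy_chain_limit_in_graph:
  fixes \<Psi> :: "'a::metric_space \<Rightarrow> 'a \<Rightarrow> 'b::metric_space set"
  assumes closed: "closed (graph (\<lambda>(x, u). \<Psi> x u))"
    and complete: "complete (UNIV :: 'a set) \<or> complete (graph (\<lambda>(x, u). \<Psi> x u))"
    and "Cauchy xs" and chain: "\<And>n. y \<in> \<Psi> (xs (Suc n)) (xs n)"
  obtains z where "xs \<longlonglongrightarrow> z" "y \<in> \<Psi> z z"
proof -
  define g where "g n = ((xs (Suc n), xs n), y)" for n
  have g_graph: "g n \<in> graph (\<lambda>(x, u). \<Psi> x u)" for n using chain by (simp add: g_def graph_def)
  obtain z where z: "xs \<longlonglongrightarrow> z"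
    using complete
  proof
    assume "complete (UNIV :: 'a set)"
    then show ?thesis using \<open>Cauchy xs\<close> that unfolding complete_def by blast
  next
    assume "complete (graph (\<lambda>(x, u). \<Psi> x u))"
    moreover have "Cauchy (\<lambda>n. xs (Suc n))"
      using \<open>Cauchy xs\<close> Cauchy_subseq_Cauchy[of xs Suc] by (simp add: strict_mono_Suc_iff o_def)
    then have "Cauchy g"
      unfolding g_def using \<open>Cauchy xs\<close> by (intro Cauchy_Pair_prod) (auto intro: metric_CauchyI)
    ultimately obtain L where "g \<longlonglongrightarrow> L" using g_graph unfolding complete_def by blast
    then have "(\<lambda>n. xs (Suc n)) \<longlonglongrightarrow> fst (fst L)"
      using tendsto_fst[OF tendsto_fst] by (fastforce simp: g_def)
    then show ?thesis using that LIMSEQ_imp_Suc by blast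
  qed
  have "g \<longlonglongrightarrow> ((z, z), y)" unfolding g_def by (intro tendsto_intros LIMSEQ_Suc z)
  then have "((z, z), y) \<in> graph (\<lambda>(x, u). \<Psi> x u)"
    using closed_sequentially[OF closed] g_graph by blast
  then show ?thesis using that z by (simp add: graph_def)
qed

lemma sur_m_geI:
  assumes "0 < s" and rates: "\<And>s'. 0 < s' \<Longrightarrow> s' < s \<Longrightarrow> milyutin_rate F U V s'"
  shows "milyutin_regular F U V \<and> ereal s \<le> sur_m F U V"
proof -
  have regular: "milyutin_regular F U V"
    unfolding milyutin_regular_def using assms by (intro exI[of _ "s / 2"]) auto
  have "ereal s \<le> Sup {ereal s' | s'. s' > 0 \<and> milyutin_rate F U V s'}"
    unfolding le_Sup_iff
  proof (intro allI impI)
    fix w assume "w < ereal s"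
    then obtain s' where "w < ereal s'" "0 < s'" "s' < s"
    proof (cases w)
      case (real w')
      then show ?thesis
        using that[of "(max w' 0 + s) / 2"] \<open>w < ereal s\<close> \<open>0 < s\<close> by auto
    qed (use that[of "s / 2"] \<open>0 < s\<close> in auto)
    then show "\<exists>a\<in>{ereal s' | s'. s' > 0 \<and> milyutin_rate F U V s'}. w < a"
      using rates by blast
  qed
  then show ?thesis using regular by (simp add: sur_m_def)
qed

locale parametric_regularity =
  fixes U :: "'a::metric_space set" and V :: "'b::metric_space set"
    and \<Psi> :: "'a \<Rightarrow> 'a \<Rightarrow> 'b set" and l r :: real
  assumes graph_closed: "closed (graph (\<lambda>(x, u). \<Psi> x u))"
    and complete: "complete (UNIV :: 'a set) \<or> complete (graph (\<lambda>(x, u). \<Psi> x u))"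
    and l_nonneg: "0 \<le> l" and l_less_r: "l < r"
    and regular: "\<forall>u\<in>U. \<forall>x\<in>U. \<forall>v\<in>\<Psi> x u. \<forall>t. 0 < t \<and> ereal t < dist_compl U x \<longrightarrow>
              (\<forall>y\<in>V. dist y v < r * t \<longrightarrow> (\<exists>x'. dist x x' \<le> dist y v / r \<and> y \<in> \<Psi> x' u))"
    and lipschitz: "\<forall>x\<in>U. \<forall>u\<in>U. \<forall>w\<in>U.
              Sup {edist z (\<Psi> x w) | z. z \<in> \<Psi> x u \<inter> V} \<le> ereal (l * dist u w)"
begin

lemma r_pos: "0 < r"
  using l_nonneg l_less_r by linarith

lemma iteration_step:
  assumes "x \<in> U" "ereal t < dist_compl U x" "y \<in> V" "xn \<in> U" "vn \<in> \<Psi> xn xn"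
    and close: "dist x xn + dist y vn / r < t" and "l / r < q"
  obtains x' v' where "dist xn x' \<le> dist y vn / r" "y \<in> \<Psi> x' xn" "x' \<in> U"
    "v' \<in> \<Psi> x' x'" "dist y v' \<le> q * dist y vn"
proof (cases "y = vn")
  case True
  then show ?thesis using that[of xn vn] assms by simp
next
  case False
  define tn where "tn = t - dist x xn"
  have "0 < dist y vn / r" using r_pos False by simp
  then have "0 < tn" using close by (simp add: tn_def)
  moreover have "dist y vn < r * tn" using close r_pos by (simp add: tn_def field_simps)
  moreover have "ereal tn < dist_compl U xn"
    unfolding tn_def using dist_compl_less_shift[OF assms(2)] .
  ultimately obtain x' where x': "dist xn x' \<le> dist y vn / r" "y \<in> \<Psi> x' xn"
    using regular assms by blast
  have "ereal (dist x x') < ereal t" using close x'(1) dist_triangle[of x x' xn] by simp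
  also note \<open>ereal t < dist_compl U x\<close>
  finally have "x' \<in> U" by (rule mem_if_dist_less_dist_compl)
  have "edist y (\<Psi> x' x') \<le> Sup {edist z (\<Psi> x' x') | z. z \<in> \<Psi> x' xn \<inter> V}"
    using x'(2) \<open>y \<in> V\<close> by (intro Sup_upper) blast
  also have "\<dots> \<le> ereal (l * dist xn x')" using lipschitz \<open>x' \<in> U\<close> \<open>xn \<in> U\<close> by blast
  finally have ed: "edist y (\<Psi> x' x') \<le> ereal (l * dist xn x')" .
  then have "\<Psi> x' x' \<noteq> {}" by (auto simp: edist_def)
  have "l * dist xn x' \<le> l * (dist y vn / r)" using x'(1) l_nonneg by (rule mult_left_mono)
  also have "\<dots> = l / r * dist y vn" by simp
  also have "\<dots> < q * dist y vn" using \<open>l / r < q\<close> False by (intro mult_strict_right_mono) auto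
  finally have "infdist y (\<Psi> x' x') < q * dist y vn"
    using ed \<open>\<Psi> x' x' \<noteq> {}\<close> by (simp add: edist_def)
  then obtain v' where "v' \<in> \<Psi> x' x'" "dist y v' < q * dist y vn"
    using infdist_lessE[OF \<open>\<Psi> x' x' \<noteq> {}\<close>] by blast
  then show ?thesis using that x' \<open>x' \<in> U\<close> by simp
qed

lemma geometric_iteration_step:
  assumes "x \<in> U" "ereal t < dist_compl U x" "y \<in> V"
    and q: "l / r < q" "q < 1" and K: "0 \<le> K" "K < t" and e_K: "e / r = K * (1 - q)"
    and hyps: "xn \<in> U" "vn \<in> \<Psi> xn xn" "dist y vn \<le> q ^ n * e" "dist x xn \<le> K * (1 - q ^ n)"
  obtains x' v' where "y \<in> \<Psi> x' xn" "dist xn x' \<le> e / r * q ^ n" "x' \<in> U" "v' \<in> \<Psi> x' x'"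
    "dist y v' \<le> q ^ Suc n * e" "dist x x' \<le> K * (1 - q ^ Suc n)"
proof -
  have "0 \<le> l / r" using l_nonneg r_pos by simp
  with q(1) have "0 \<le> q" by linarith
  have step_le: "dist y vn / r \<le> e / r * q ^ n"
    using hyps(3) r_pos by (simp add: divide_right_mono mult.commute)
  have "dist x xn + dist y vn / r \<le> K * (1 - q ^ n) + K * (1 - q) * q ^ n"
    using hyps(4) step_le e_K by simp
  also have "\<dots> = K * (1 - q ^ Suc n)" by (simp add: algebra_simps)
  finally have within: "dist x xn + dist y vn / r \<le> K * (1 - q ^ Suc n)" .
  also have "\<dots> \<le> K" using K(1) \<open>0 \<le> q\<close> by (simp add: mult_left_le)
  finally have "dist x xn + dist y vn / r < t" using K(2) by linarith
  then obtain x' v' where x': "dist xn x' \<le> dist y vn / r" "y \<in> \<Psi> x' xn" "x' \<in> U"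
    "v' \<in> \<Psi> x' x'" "dist y v' \<le> q * dist y vn"
    using iteration_step assms(1-3) hyps(1,2) q(1) by metis
  have "dist y v' \<le> q ^ Suc n * e"
    using x'(5) mult_left_mono[OF hyps(3) \<open>0 \<le> q\<close>] by simp
  moreover have "dist x x' \<le> K * (1 - q ^ Suc n)"
    using dist_triangle[of x x' xn] x'(1) within by linarith
  ultimately show ?thesis using that[OF x'(2) order_trans[OF x'(1) step_le] x'(3,4)] by blast
qed

lemma iterates_exist:
  assumes "x \<in> U" "0 < t" "ereal t < dist_compl U x" "y \<in> V" "v \<in> \<Psi> x x"
    and near: "dist y v < (r - l) * t"
  obtains xs where "Cauchy xs" "\<And>n. y \<in> \<Psi> (xs (Suc n)) (xs n)" "\<And>n. dist x (xs n) < t"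
proof -
  define e where "e = dist y v"
  have "l / r < 1 - e / (r * t)" using near r_pos \<open>0 < t\<close> by (simp add: e_def field_simps)
  then obtain q where q: "l / r < q" "e / (r * t) < 1 - q" using dense by force
  have "0 \<le> l / r" "0 \<le> e / (r * t)" using l_nonneg r_pos \<open>0 < t\<close> by (simp_all add: e_def)
  then have q01: "0 \<le> q" "q < 1" using q by linarith+
  \<comment> \<open>\<open>K = \<Sum>\<^sub>n e q\<^sup>n / r\<close> bounds the total displacement of the iterates.\<close>
  define K where "K = e / (r * (1 - q))"
  have K: "0 \<le> K" "K < t" using q(2) q01 r_pos \<open>0 < t\<close> by (simp_all add: K_def e_def field_simps)
  have e_K: "e / r = K * (1 - q)" using q01 r_pos by (simp add: K_def field_simps)
  define P where "P n p \<longleftrightarrow> fst p \<in> U \<and> snd p \<in> \<Psi> (fst p) (fst p) \<and>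
    dist y (snd p) \<le> q ^ n * e \<and> dist x (fst p) \<le> K * (1 - q ^ n)" for n p
  define Q where "Q n p p' \<longleftrightarrow> y \<in> \<Psi> (fst p') (fst p) \<and> dist (fst p) (fst p') \<le> e / r * q ^ n"
    for n :: nat and p p' :: "'a \<times> 'b"
  have "P 0 (x, v)" using assms by (simp add: P_def e_def)
  moreover have "\<exists>p'. P (Suc n) p' \<and> Q n p p'" if "P n p" for n p
  proof -
    have "fst p \<in> U" "snd p \<in> \<Psi> (fst p) (fst p)" "dist y (snd p) \<le> q ^ n * e"
      "dist x (fst p) \<le> K * (1 - q ^ n)"
      using that by (simp_all add: P_def)
    then obtain x' v' where "y \<in> \<Psi> x' (fst p)" "dist (fst p) x' \<le> e / r * q ^ n" "x' \<in> U"
      "v' \<in> \<Psi> x' x'" "dist y v' \<le> q ^ Suc n * e" "dist x x' \<le> K * (1 - q ^ Suc n)"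
      by (rule geometric_iteration_step[OF assms(1,3,4) q(1) q01(2) K e_K])
    then have "P (Suc n) (x', v') \<and> Q n p (x', v')" by (simp add: P_def Q_def)
    then show ?thesis ..
  qed
  ultimately obtain f where f: "\<And>n. P n (f n) \<and> Q n (f n) (f (Suc n))"
    using dependent_nat_choice[of P Q] by blast
  show ?thesis
  proof
    show "Cauchy (\<lambda>n. fst (f n))"
      using q01 f by (intro Cauchy_if_geometric_steps[of q _ "e / r"]) (simp_all add: Q_def)
    show "y \<in> \<Psi> (fst (f (Suc n))) (fst (f n))" for n using f[of n] by (simp add: Q_def)
    show "dist x (fst (f n)) < t" for n
    proof -
      have "dist x (fst (f n)) \<le> K * (1 - q ^ n)" using f[of n] by (simp add: P_def)
      also have "\<dots> \<le> K" using K(1) q01 by (simp add: mult_left_le)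
      finally show ?thesis using K(2) by linarith
    qed
  qed
qed

lemma solution_nearby:
  assumes "x \<in> U" "0 < t" "ereal t < dist_compl U x" "y \<in> V" "v \<in> \<Psi> x x"
    and "dist y v < (r - l) * t"
  obtains x' where "dist x' x \<le> t" "y \<in> \<Psi> x' x'"
proof -
  obtain xs where xs: "Cauchy xs" "\<And>n. y \<in> \<Psi> (xs (Suc n)) (xs n)" "\<And>n. dist x (xs n) < t"
    using iterates_exist assms by metis
  then obtain z where z: "xs \<longlonglongrightarrow> z" "y \<in> \<Psi> z z"
    using Cauchy_chain_limit_in_graph[OF graph_closed complete] by metis
  have "(\<lambda>n. dist x (xs n)) \<longlonglongrightarrow> dist x z" by (intro tendsto_intros z)
  then have "dist x z \<le> t" using xs(3) by (intro LIMSEQ_le_const2) (auto intro: less_imp_le)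
  then show ?thesis using that z(2) by (simp add: dist_commute)
qed

lemma milyutin_rate_diagonal:
  assumes "0 < s" "s < r - l"
  shows "milyutin_rate (\<lambda>x. \<Psi> x x) U V s"
  unfolding milyutin_rate_def
proof (intro ballI allI impI subsetI)
  fix x t y assume "x \<in> U" and t: "0 \<le> t \<and> ereal t < dist_compl U x"
    and "y \<in> Bset (\<Psi> x x) (s * t) \<inter> V"
  then obtain v where v: "v \<in> \<Psi> x x" "dist y v \<le> s * t" and "y \<in> V"
    by (auto simp: Bset_def)
  show "y \<in> (\<Union>x'\<in>Bset {x} t. \<Psi> x' x')"
  proof (cases "t = 0")
    case True
    then show ?thesis using v by (auto simp: Bset_def)
  next
    case False
    then have "0 < t" using t by simp
    have "s * t < (r - l) * t" using \<open>0 < t\<close> assms by simp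
    with v(2) have "dist y v < (r - l) * t" by linarith
    then obtain x' where "dist x' x \<le> t" "y \<in> \<Psi> x' x'"
      using solution_nearby \<open>x \<in> U\<close> \<open>0 < t\<close> t \<open>y \<in> V\<close> v(1) by metis
    then show ?thesis by (auto simp: Bset_def)
  qed
qed

end

theorem mainTheorem3:
  fixes U :: "'a::metric_space set" and V :: "'b::metric_space set"
    and \<Psi> :: "'a \<Rightarrow> 'a \<Rightarrow> 'b set" and F :: "'a \<Rightarrow> 'b set"
    and l r :: real
  assumes "open U" and "open V"
    and "closed (graph (\<lambda>(x, u). \<Psi> x u))"
    and "complete (UNIV :: 'a set) \<or> complete (graph (\<lambda>(x, u). \<Psi> x u))"
    and "\<And>x. F x = \<Psi> x x"
    and "0 \<le> l" and "l < r"
    and a: "\<forall>u\<in>U. \<forall>x\<in>U. \<forall>v\<in>\<Psi> x u. \<forall>t. 0 < t \<and> ereal t < dist_compl U x \<longrightarrow>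
              (\<forall>y\<in>V. dist y v < r * t \<longrightarrow> (\<exists>x'. dist x x' \<le> dist y v / r \<and> y \<in> \<Psi> x' u))"
    and b: "\<forall>x\<in>U. \<forall>u\<in>U. \<forall>w\<in>U.
              Sup {edist z (\<Psi> x w) | z. z \<in> \<Psi> x u \<inter> V} \<le> ereal (l * dist u w)"
  shows "milyutin_regular F U V \<and> sur_m F U V \<ge> ereal (r - l)"
proof -
  interpret parametric_regularity U V \<Psi> l r
    using assms(3,4,6,7) a b by unfold_locales
  have "F = (\<lambda>x. \<Psi> x x)" using assms(5) by blast
  then show ?thesis
    using milyutin_rate_diagonal \<open>l < r\<close> by (intro sur_m_geI) auto
qed

end
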